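(* Let $X$ be the Cartwright–Steger surface. Suppose $D$ is a divisor on $X$, not necessarily effective, with $K_X\cdot D=2$ and $D^2=0$. Then $D$ is numerically equivalent to one of the two $\mathbb{Q}$-divisors $$D_I=\tfrac19(E_1-E_3+2C_1)\ \ (\text{numerically } \tfrac19(2E_3+C_1-C_2)),\qquad D_{II}=\tfrac19(-E_1+5E_3-2C_1)\ \ (\text{numerically }\tfrac19(2E_3-C_1+C_2)).$$ Equivalently, $(D\cdot E_1,D\cdot E_3,D\cdot C_1)\in\{(2,2,0),(2,2,4)\}$.
   Context: The Cartwright–Steger surface $X$ is the compact arithmetic complex ball quotient of Cartwright–Steger: minimal of general type, $p_g=q=1$, $K_X^2=9$, $H^2(X,\mathbb{Z})\cong\mathbb{Z}^5$ torsion free, and $\mathrm{NS}(X)$ free of rank 3. $X$ contains irreducible totally geodesic curves $E_1,E_2,E_3$ (geometric genus 4), $C_1,C_2$ (geometric genus 4), $C_3,C_4$ (geometric genus 10) (the preimages of the two branch curves of the Deligne–Mostow quotient $\mathbb{P}(1,2,3)$), with intersection numbers (rows/columns in the order $E_1,E_2,E_3,C_1,C_2,C_3,C_4$): $$\begin{pmatrix}5&13&9&11&11&25&25\\13&5&9&7&7&29&29\\9&9&9&9&9&27&27\\11&7&9&-1&17&37&19\\11&7&9&17&-1&19&37\\25&29&27&37&19&71&89\\25&29&27&19&37&89&71\end{pmatrix}.$$ $K_X$ is numerically equivalent to $E_3$, and $3E_3$ is numerically equivalent to $E_1+C_1+C_2$. The classes of $E_1,E_3,C_1$ form a $\mathbb{Q}$-basis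 of $\mathrm{NS}(X)\otimes\mathbb{Q}$. *)

theory Defs
  imports Complex_Main
begin

definition intersection_form :: "('d::ab_group_add \<Rightarrow> 'd \<Rightarrow> int) \<Rightarrow> bool" where
  "intersection_form ip \<longleftrightarrow>
     (\<forall>a b c. ip (a + b) c = ip a c + ip b c) \<and> (\<forall>a b. ip a b = ip b a)"

definition num_equiv :: "('d \<Rightarrow> 'd \<Rightarrow> int) \<Rightarrow> 'd \<Rightarrow> 'd \<Rightarrow> bool" where
  "num_equiv ip A B \<longleftrightarrow> (\<forall>F. ip A F = ip B F)"

text \<open>The intersection matrix of E1,E2,E3,C1,C2,C3,C4 on the Cartwright--Steger surface.\<close>
definition CS_matrix :: "int list list" where
  "CS_matrix =
    [[ 5, 13,  9, 11, 11, 25, 25],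
     [13,  5,  9,  7,  7, 29, 29],
     [ 9,  9,  9,  9,  9, 27, 27],
     [11,  7,  9, -1, 17, 37, 19],
     [11,  7,  9, 17, -1, 19, 37],
     [25, 29, 27, 37, 19, 71, 89],
     [25, 29, 27, 19, 37, 89, 71]]"

end

theory Submission
  imports Defs
begin

text \<open>Write \<open>x = D\<cdot>E\<^sub>1\<close>, \<open>z = D\<cdot>C\<^sub>1\<close>; since \<open>K \<equiv> E\<^sub>3\<close> we have \<open>D\<cdot>E\<^sub>3 = 2\<close>. A nonzero
multiple \<open>nD\<close> is numerically \<open>aE\<^sub>1 + bE\<^sub>3 + cC\<^sub>1\<close>, and inverting the Gram matrix of
\<open>E\<^sub>1, E\<^sub>3, C\<^sub>1\<close> (determinant 324) expresses \<open>a, b, c\<close> linearly in \<open>x, z\<close>. Then \<open>D\<^sup>2 = 0\<close>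
becomes a positive definite integral conic in \<open>(x, z)\<close> whose only lattice points are
\<open>(2, 0)\<close> and \<open>(2, 4)\<close>, and each of them fixes \<open>D\<close> up to numerical equivalence.\<close>

lemma CS_conic_int_solutions:
  fixes x z :: int
  assumes "5*x^2 - 24*x + 2*x*z + 28 - 12*z + 2*z^2 = 0"
  shows "(x = 2 \<and> z = 0) \<or> (x = 2 \<and> z = 4)"
proof -
  have completed: "(4*z + 2*x - 12)^2 = 64 - 4*(3*x - 6)^2"
    using assms by (simp add: algebra_simps power2_eq_square)
  have "(3*x - 6)^2 \<le> 16" using completed zero_le_power2[of "4*z + 2*x - 12"] by linarith
  then have "\<bar>3*x - 6\<bar> \<le> 4" using abs_le_square_iff[of "3*x - 6" 4] by simp
  then have x: "x \<in> {1, 2, 3}" by auto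
  have "(4*z + 2*x - 12)^2 \<le> 64" using completed zero_le_power2[of "3*x - 6"] by linarith
  then have "\<bar>4*z + 2*x - 12\<bar> \<le> 8" using abs_le_square_iff[of "4*z + 2*x - 12" 8] by simp
  with x have "x \<in> {1, 2, 3} \<and> z \<in> {-1, 0, 1, 2, 3, 4, 5, 6}" by auto
  then show ?thesis using assms by (auto simp: power2_eq_square)
qed

lemma CS_Gram_E1_E3_C1:
  assumes "\<forall>i<7. \<forall>j<7. ip ([E1, E2, E3, C1, C2, C3, C4] ! i) ([E1, E2, E3, C1, C2, C3, C4] ! j)
             = CS_matrix ! i ! j"
  shows "ip E1 E1 = 5" "ip E1 E3 = 9" "ip E1 C1 = 11"
    and "ip E3 E3 = 9" "ip E3 C1 = 9" "ip C1 C1 = -1"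
  using assms[rule_format, of 0 0] assms[rule_format, of 0 2] assms[rule_format, of 0 3]
    assms[rule_format, of 2 2] assms[rule_format, of 2 3] assms[rule_format, of 3 3]
  by (simp_all add: CS_matrix_def)

lemma CS_Gram_inverse:
  fixes n a b c x z :: int
  assumes "n*x = 5*a + 9*b + 11*c" "n*2 = 9*a + 9*b + 9*c" "n*z = 11*a + 9*b - c"
  shows "18*a = n*(-5*x + 12 - z)" "54*b = n*(18*x - 42 + 9*z)" "18*c = n*(-x + 6 - 2*z)"
  using assms by (simp_all add: algebra_simps)

lemma CS_self_intersection_conic:
  fixes n a b c x z :: int
  assumes "n \<noteq> 0"
    and "n*x = 5*a + 9*b + 11*c" "n*2 = 9*a + 9*b + 9*c" "n*z = 11*a + 9*b - c"
    and "a*x + b*2 + c*z = 0"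
  shows "5*x^2 - 24*x + 2*x*z + 28 - 12*z + 2*z^2 = 0"
proof -
  note inv = CS_Gram_inverse[OF assms(2-4)]
  have "0 = 54*(a*x + b*2 + c*z)" using assms(5) by simp
  also have "\<dots> = 3*(18*a)*x + 2*(54*b) + 3*(18*c)*z" by (simp add: algebra_simps)
  also have "\<dots> = -3*n*(5*x^2 - 24*x + 2*x*z + 28 - 12*z + 2*z^2)"
    unfolding inv by (simp add: algebra_simps power2_eq_square)
  finally show ?thesis using assms(1) by simp
qed

lemma rat_pairing_eq_of_scaled_combination:
  fixes f e1 e3 c1 :: "'a \<Rightarrow> int"
  assumes "n \<noteq> 0" "m \<noteq> 0"
    and "\<forall>G. n * f G = a * e1 G + b * e3 G + c * c1 G"
    and "m*a = p*n" "m*b = q*n" "m*c = r*n"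
  shows "(of_int (f F) :: rat) = (1 / of_int m) * of_int (p * e1 F + q * e3 F + r * c1 F)"
proof -
  have "n * (m * f F) = (m*a) * e1 F + (m*b) * e3 F + (m*c) * c1 F"
    using assms(3) by (simp add: algebra_simps)
  also have "\<dots> = n * (p * e1 F + q * e3 F + r * c1 F)"
    unfolding assms(4-6) by (simp add: algebra_simps)
  finally have "m * f F = p * e1 F + q * e3 F + r * c1 F" using assms(1) by simp
  then have "of_int m * (of_int (f F) :: rat) = of_int (p * e1 F + q * e3 F + r * c1 F)"
    by (metis of_int_mult)
  then show ?thesis using assms(2) by (simp add: field_simps)
qed

theorem mainTheorem4:
  fixes ip :: "'d::ab_group_add \<Rightarrow> 'd \<Rightarrow> int"
    and K E1 E2 E3 C1 C2 C3 C4 D :: 'd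
  assumes form: "intersection_form ip"
    and matrix: "\<forall>i<7. \<forall>j<7. ip ([E1, E2, E3, C1, C2, C3, C4] ! i) ([E1, E2, E3, C1, C2, C3, C4] ! j)
                   = CS_matrix ! i ! j"
    and canonical: "num_equiv ip K E3"
    and rel: "num_equiv ip (E3 + E3 + E3) (E1 + C1 + C2)"
    and spanning: "\<forall>F. \<exists>n::int. n \<noteq> 0 \<and> (\<exists>a b c::int. \<forall>G.
                     n * ip F G = a * ip E1 G + b * ip E3 G + c * ip C1 G)"
    and independent: "\<forall>a b c::int. (\<forall>G. a * ip E1 G + b * ip E3 G + c * ip C1 G = 0)
                     \<longrightarrow> a = 0 \<and> b = 0 \<and> c = 0"
    and KD: "ip K D = 2"
    and DD: "ip D D = 0"
  shows "(\<forall>F. (of_int (ip D F) :: rat)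
              = (1/9) * of_int (ip E1 F - ip E3 F + 2 * ip C1 F))
       \<or> (\<forall>F. (of_int (ip D F) :: rat)
              = (1/9) * of_int (- ip E1 F + 5 * ip E3 F - 2 * ip C1 F))"
proof -
  have sym: "\<And>u v. ip u v = ip v u" using form unfolding intersection_form_def by blast
  note Gram = CS_Gram_E1_E3_C1[OF matrix]
  have DE3: "ip D E3 = 2" using canonical KD sym unfolding num_equiv_def by metis
  obtain n a b c where n: "n \<noteq> 0" and comb: "\<forall>G. n * ip D G = a * ip E1 G + b * ip E3 G + c * ip C1 G"
    using spanning by blast
  define x z where "x = ip D E1" and "z = ip D C1"
  have eqs: "n*x = 5*a + 9*b + 11*c" "n*2 = 9*a + 9*b + 9*c" "n*z = 11*a + 9*b - c"
    using comb[rule_format, of E1] comb[rule_format, of E3] comb[rule_format, of C1] Gram DE3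
      sym[of E3 E1] sym[of C1 E1] sym[of C1 E3]
    unfolding x_def z_def by simp_all
  have "a*x + b*2 + c*z = 0"
    using comb[rule_format, of D] DD sym[of E1 D] sym[of E3 D] sym[of C1 D] DE3
    unfolding x_def z_def by simp
  then have "(x = 2 \<and> z = 0) \<or> (x = 2 \<and> z = 4)"
    by (intro CS_conic_int_solutions CS_self_intersection_conic[OF n eqs])
  then show ?thesis
  proof
    assume "x = 2 \<and> z = 0"
    then have "9*a = 1*n" "9*b = -1*n" "9*c = 2*n" using CS_Gram_inverse[OF eqs] by simp_all
    from rat_pairing_eq_of_scaled_combination[OF n _ comb this] show ?thesis by simp
  next
    assume "x = 2 \<and> z = 4"
    then have "9*a = -1*n" "9*b = 5*n" "9*c = -2*n" using CS_Gram_inverse[OF eqs] by simp_all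
    from rat_pairing_eq_of_scaled_combination[OF n _ comb this] show ?thesis by simp
  qed
qed

end
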